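(* Let $q>2$ be a power of $2$ and let $U$ be an intersecting family of polynomials over $\mathbb{F}_q$ of degree at most $2$, with $f$, $B_t$, $\mathrm{Dom}$ as in the context. Let $A,B\colon\mathrm{Dom}\to\mathbb{F}_q$ be functions such that $f(b,b+t)=A(t)b+B(t)$ for every $t\in\mathrm{Dom}$ and $b\in B_t$, and $\mathrm{Tr}_{q/2}(A(t))=0$ for every $t\in\mathrm{Dom}$. Then there exist $\alpha,\beta\in\mathbb{F}_q$ such that $A(t)=\alpha^{q/2}+\alpha$ and $B(t)=\alpha t+\beta$ for each $t\in\mathrm{Dom}$.
   Context: $q=2^n$ and $\mathrm{Tr}_{q/2}(x)=x+x^2+\cdots+x^{2^{n-1}}$. A set of polynomials over $\mathbb{F}_q$ is intersecting if the graphs $\{(x,g(x)):x\in\mathbb{F}_q\}$ of any two members share a point. For such $U$ of degree at most $2$, let $D=\{(b,c)\in\mathbb{F}_q^2 : a+bx+cx^2\in U\text{ for some } a\}$; for $(b,c)\in D$ this $a$ is unique and $f(b,c):=a$. For $t\in\mathbb{F}_q$ let $B_t=\{b\in\mathbb{F}_q : (b,b+t)\in D\}$ and $\mathrm{Dom}=\{t\in\mathbb{F}_q : |B_t|\ge q-\sqrt{q}/2\}$. *)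

theory Defs
  imports "HOL-Computational_Algebra.Polynomial" Complex_Main
begin

text \<open>Absolute trace Tr_{q/2}(x) = x + x^2 + ... + x^(2^(n-1)), q = 2^n.\<close>
definition tr2 :: "nat \<Rightarrow> 'a::field \<Rightarrow> 'a" where
  "tr2 n x = (\<Sum>i<n. x ^ (2 ^ i))"

definition intersecting :: "'a::comm_ring_1 poly set \<Rightarrow> bool" where
  "intersecting U \<longleftrightarrow> (\<forall>g\<in>U. \<forall>h\<in>U. \<exists>x. poly g x = poly h x)"

definition Dset :: "'a::comm_ring_1 poly set \<Rightarrow> ('a \<times> 'a) set" where
  "Dset U = {(b, c). \<exists>a. [:a, b, c:] \<in> U}"

definition fU :: "'a::comm_ring_1 poly set \<Rightarrow> 'a \<Rightarrow> 'a \<Rightarrow> 'a" where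
  "fU U b c = (THE a. [:a, b, c:] \<in> U)"

definition Bset :: "'a::comm_ring_1 poly set \<Rightarrow> 'a \<Rightarrow> 'a set" where
  "Bset U t = {b. (b, b + t) \<in> Dset U}"

definition DomU :: "'a::{comm_ring_1,finite} poly set \<Rightarrow> 'a set" where
  "DomU U = {t. real (card (Bset U t)) \<ge> real (card (UNIV :: 'a set)) - sqrt (real (card (UNIV :: 'a set))) / 2}"

end

theory Submission
  imports Defs
begin

(*
  Two members of U meet, so their difference (a - a') + (b - b') x + (c - c') x^2 has a root x;
  then y = (c - c') x / (b - b') solves y^2 + y = (a - a') (c - c') / (b - b')^2, and in
  characteristic 2 the right-hand side has trace 0. For the members with coefficients (b, b + t)
  and (b - d, b - d + s) this says that b \<mapsto> Tr(\<mu> b + \<kappa>) vanishes on B_t \<inter> (B_s + d), a set of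
  at least q - sqrt q elements, where \<mu> is a nonzero multiple of A t - A s. A nonconstant affine
  function has trace 0 at only q/2 points, so A is constant on Dom when q > 4; for q = 4 a finer
  count is needed.

  Write this constant as g^2 + g, which is possible because its trace is 0. Choosing one b for
  every d and reading the same condition as a function of u = 1/d gives Tr(\<Lambda> u) = 0 for all
  u \<noteq> 1/(t - s), with \<Lambda> = A (t - s) + (B t - B s) + sqrt((B t - B s) (t - s)). Hence \<Lambda> = 0,
  which says that the slope (B t - B s)/(t - s) is g^2 or (g + 1)^2. A function whose difference
  quotients take only two values is affine with one of them as slope, and both candidates \<alpha>
  satisfy \<alpha>^(q/2) + \<alpha> = g^2 + g.
*)

lemma ex_avoiding_two:
  assumes "2 < card (UNIV :: 'a::finite set)"
  shows "\<exists>z::'a. z \<noteq> x \<and> z \<noteq> y"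
proof (rule ccontr)
  assume "\<not> ?thesis"
  then have "UNIV \<subseteq> {x, y}"
    by auto
  then have "card (UNIV :: 'a set) \<le> card {x, y}"
    by (intro card_mono) auto
  also have "\<dots> \<le> 2"
    by (simp add: card_insert_if)
  finally show False
    using assms by simp
qed

lemma ex_cosingleton_subset:
  assumes "card (UNIV :: 'a::finite set) \<le> Suc (card X)"
  shows "\<exists>p. - {p} \<subseteq> (X :: 'a set)"
proof -
  have "card (- X) \<le> Suc 0"
    using assms card_Diff_subset[of X UNIV] by (simp add: Compl_eq_Diff_UNIV)
  then obtain p where "- X \<subseteq> {p}"
    by (metis card_le_Suc0_iff_eq finite subset_eq singletonI ex_in_conv)
  then show ?thesis
    by blast
qed

lemma sqrt_lt_half:
  assumes "4 < x"
  shows "sqrt x < x / 2"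
proof (rule real_less_lsqrt)
  show "x < (x / 2)\<^sup>2"
    using assms by (simp add: power2_eq_square field_simps)
qed (use assms in auto)

lemma affine_on_if_two_slopes:
  fixes f :: "'a::comm_ring \<Rightarrow> 'a"
  assumes slopes: "\<And>t s. t \<in> D \<Longrightarrow> s \<in> D \<Longrightarrow>
    f t - f s = a * (t - s) \<or> f t - f s = c * (t - s)"
  shows "\<exists>m\<in>{a, c}. \<exists>\<beta>. \<forall>t\<in>D. f t = m * t + \<beta>"
proof (cases "\<exists>\<beta>. \<forall>t\<in>D. f t = a * t + \<beta>")
  case False
  then obtain t0 where t0: "t0 \<in> D"
    by blast
  from False obtain t1 where t1: "t1 \<in> D" "f t1 \<noteq> a * t1 + (f t0 - a * t0)"
    by blast
  then have not_a: "f t1 - f t0 \<noteq> a * (t1 - t0)"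
    by (auto simp: algebra_simps)
  then have c_t1_t0: "f t1 - f t0 = c * (t1 - t0)"
    using slopes[OF t1(1) t0] by blast
  have "f t - c * t = f t1 - c * t1" if t: "t \<in> D" for t
  proof (cases "f t - f t1 = a * (t - t1)")
    case True
    have "f t - f t0 \<noteq> a * (t - t0)"
    proof
      assume t_t0: "f t - f t0 = a * (t - t0)"
      have "f t1 - f t0 = (f t - f t0) - (f t - f t1)"
        by simp
      also have "\<dots> = a * (t - t0) - a * (t - t1)"
        using t_t0 True by simp
      also have "\<dots> = a * (t1 - t0)"
        by (simp add: algebra_simps)
      finally show False
        using not_a by simp
    qed
    then have "f t - c * t = f t0 - c * t0"
      using slopes[OF t t0] by (auto simp: algebra_simps)
    also have "\<dots> = f t1 - c * t1"
      using c_t1_t0 by (simp add: algebra_simps)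
    finally show ?thesis .
  next
    case False
    then show ?thesis
      using slopes[OF t t1(1)] by (auto simp: algebra_simps)
  qed
  then have "\<forall>t\<in>D. f t = c * t + (f t1 - c * t1)"
    by (simp add: algebra_simps)
  then show ?thesis
    by blast
qed blast

section \<open>Finite fields of characteristic 2\<close>

lemma power_card_UNIV_eq:
  fixes x :: "'a::{field,finite}"
  shows "x ^ card (UNIV :: 'a set) = x"
proof (cases "x = 0")
  case False
  have "x * (\<Prod>y\<in>UNIV-{0}. x * y) = x * x ^ (card (UNIV :: 'a set) - 1) * \<Prod>(UNIV-{0})"
    by (simp add: prod.distrib mult_ac)
  also have "x * x ^ (card (UNIV :: 'a set) - 1) = x ^ card (UNIV :: 'a set)"
    using finite_UNIV_card_ge_0[where ?'a = 'a] by (simp flip: power_Suc)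
  also have "(\<Prod>y\<in>UNIV-{0}. x * y) = (\<Prod>y\<in>UNIV-{0}. y)"
    by (rule prod.reindex_bij_witness[of _ "\<lambda>y. y / x" "\<lambda>y. x * y"]) (use False in auto)
  finally show ?thesis
    by simp
qed (use finite_UNIV_card_ge_0[where ?'a = 'a] in auto)

lemma of_nat_card_UNIV_eq_0: "of_nat (card (UNIV :: 'a set)) = (0::'a::{field,finite})"
proof -
  have "(\<Sum>x\<in>UNIV. x + 1) = (\<Sum>x::'a\<in>UNIV. x)"
    by (rule sum.reindex_bij_witness[of _ "\<lambda>y. y - 1" "\<lambda>y. y + 1"]) auto
  then show ?thesis
    by (simp add: sum.distrib)
qed

lemma card_UNIV_ge_2: "2 \<le> card (UNIV :: 'a::{field,finite} set)"
proof -
  have "card {0::'a, 1} \<le> card (UNIV :: 'a set)"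
    by (intro card_mono) auto
  then show ?thesis
    by simp
qed

lemma sum_UNIV_eq_0:
  assumes "2 < card (UNIV :: 'a::{field,finite} set)"
  shows "(\<Sum>x\<in>UNIV. x) = (0::'a)"
proof -
  obtain a :: 'a where a: "a \<noteq> 0" "a \<noteq> 1"
    using ex_avoiding_two[OF assms] by blast
  have "(\<Sum>x\<in>UNIV. a * x) = (\<Sum>x::'a\<in>UNIV. x)"
    by (rule sum.reindex_bij_witness[of _ "\<lambda>y. y / a" "\<lambda>y. a * y"]) (use a in auto)
  then have "(a - 1) * (\<Sum>x\<in>UNIV. x) = 0"
    by (simp add: sum_distrib_left left_diff_distrib sum_subtractf)
  then show ?thesis
    using a by simp
qed

lemma sum_eq_0_if_UNIV_card_4:
  fixes w x y z :: "'a::{field,finite}"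
  assumes "card (UNIV :: 'a set) = 4" and "UNIV = {w, x, y, z}"
  shows "w + x + y + z = 0"
proof -
  have "distinct [w, x, y, z]"
    by (rule card_distinct) (use assms in simp)
  then have "w + x + y + z = (\<Sum>v\<in>UNIV. v)"
    unfolding assms(2) by (simp add: add.assoc)
  also have "\<dots> = 0"
    by (rule sum_UNIV_eq_0) (use assms in simp)
  finally show ?thesis .
qed

lemma char2_add_self: "(2::'a::ring_1) = 0 \<Longrightarrow> x + x = (0::'a)"
  by (simp flip: mult_2)

lemma char2_minus_eq: "(2::'a::ring_1) = 0 \<Longrightarrow> - x = (x::'a)"
  using char2_add_self[of x] by (simp add: add_eq_0_iff)

lemma char2_add_eq_0_iff: "(2::'a::ring_1) = 0 \<Longrightarrow> x + y = 0 \<longleftrightarrow> x = (y::'a)"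
  by (metis add_eq_0_iff char2_minus_eq)

lemma char2_power2_add: "(2::'a::comm_ring_1) = 0 \<Longrightarrow> (x + y)^2 = x^2 + (y::'a)^2"
  by (simp add: power2_sum)

lemma char2_power_2_power_add:
  "(2::'a::comm_ring_1) = 0 \<Longrightarrow> (x + y) ^ 2 ^ i = x ^ 2 ^ i + (y::'a) ^ 2 ^ i"
proof (induction i arbitrary: x y)
  case (Suc i)
  then show ?case
    by (simp add: power_mult char2_power2_add)
qed simp

lemma char2_cube_of_sum:
  fixes x y :: "'a::field"
  assumes "(2::'a) = 0" and "x \<noteq> 0" and "y \<noteq> 0" and "x + x^2 / y = y + y^2 / x"
  shows "(x + y)^3 = 0"
proof -
  have "x^2 * y + x^3 = x * y^2 + y^3"
    using assms(2-4) by (simp add: field_simps power2_eq_square power3_eq_cube)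
  moreover have "(x + y)^3 = (x^2 * y + x^3 - (x * y^2 + y^3)) + 2 * (2 * x * y^2 + y^3 + x^2 * y)"
    by (simp add: algebra_simps power2_eq_square power3_eq_cube)
  ultimately show ?thesis
    using assms(1) by simp
qed

lemma artin_schreier_eq_iff:
  fixes x y :: "'a::field"
  assumes "(2::'a) = 0"
  shows "x^2 + x = y^2 + y \<longleftrightarrow> x = y \<or> x = y + 1"
proof -
  have "x^2 + x - (y^2 + y) = (x - y) * (x - (y + 1)) + 2 * (x + x * y - y^2 - y)"
    by (simp add: algebra_simps power2_eq_square)
  then have "x^2 + x - (y^2 + y) = (x - y) * (x - (y + 1))"
    using assms by simp
  then show ?thesis
    by (metis mult_eq_0_iff right_minus_eq)
qed

lemma char2_if_card_UNIV:
  assumes "card (UNIV :: 'a::{field,finite} set) = 2 ^ n"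
  shows "(2::'a) = 0"
proof -
  have "(2::'a) ^ n = 0"
    using of_nat_card_UNIV_eq_0[where 'a='a] assms by simp
  then show ?thesis
    by simp
qed

lemma power_2_power_eq:
  fixes x :: "'a::{field,finite}"
  assumes "card (UNIV :: 'a set) = 2 ^ n"
  shows "x ^ 2 ^ n = x"
  using power_card_UNIV_eq[of x] assms by simp

lemma even_card_UNIV:
  assumes "card (UNIV :: 'a::{field,finite} set) = 2 ^ n"
  shows "even (card (UNIV :: 'a set))"
  using assms card_UNIV_ge_2[where 'a='a] by (cases n) auto

definition frob_inv :: "'a::{field,finite} \<Rightarrow> 'a" where
  "frob_inv x = x ^ (card (UNIV :: 'a set) div 2)"

lemma frob_inv_power2:
  fixes x :: "'a::{field,finite}"
  assumes "card (UNIV :: 'a set) = 2 ^ n"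
  shows "frob_inv (x^2) = x"
proof -
  have "frob_inv (x^2) = x ^ card (UNIV :: 'a set)"
    using even_card_UNIV[OF assms] by (simp add: frob_inv_def flip: power_mult)
  then show ?thesis
    by (simp add: power_card_UNIV_eq)
qed

lemma power2_frob_inv:
  fixes x :: "'a::{field,finite}"
  assumes "card (UNIV :: 'a set) = 2 ^ n"
  shows "(frob_inv x)^2 = x"
proof -
  have "(frob_inv x)^2 = x ^ card (UNIV :: 'a set)"
    using even_card_UNIV[OF assms] by (simp add: frob_inv_def mult.commute flip: power_mult)
  then show ?thesis
    by (simp add: power_card_UNIV_eq)
qed

section \<open>The absolute trace\<close>

lemma tr2_0 [simp]: "tr2 n 0 = 0"
  by (simp add: tr2_def power_0_left)

lemma tr2_add: "(2::'a::field) = 0 \<Longrightarrow> tr2 n (x + y) = tr2 n x + tr2 n (y::'a)"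
  by (simp add: tr2_def char2_power_2_power_add sum.distrib)

lemma tr2_power2:
  assumes "(x::'a::field) ^ 2 ^ n = x"
  shows "tr2 n (x^2) = tr2 n x"
proof -
  have "tr2 n (x^2) + x = (\<Sum>i<n. x ^ 2 ^ Suc i) + x ^ 2 ^ 0"
    by (simp add: tr2_def power_mult[symmetric] mult.commute)
  also have "\<dots> = (\<Sum>i<Suc n. x ^ 2 ^ i)"
    by (simp only: sum.lessThan_Suc_shift add.commute)
  also have "\<dots> = tr2 n x + x ^ 2 ^ n"
    by (simp add: tr2_def)
  finally show ?thesis
    using assms by simp
qed

lemma tr2_artin_schreier:
  fixes x :: "'a::{field,finite}"
  assumes "card (UNIV :: 'a set) = 2 ^ n"
  shows "tr2 n (x^2 + x) = 0"
  using char2_if_card_UNIV[OF assms] power_2_power_eq[OF assms]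
  by (simp add: tr2_add tr2_power2 char2_add_self)

lemma tr2_2_eq_0_iff: "(2::'a::field) = 0 \<Longrightarrow> tr2 2 x = 0 \<longleftrightarrow> x = 0 \<or> x = (1::'a)"
  using artin_schreier_eq_iff[of x 0] by (simp add: tr2_def numeral_2_eq_2 add.commute)

lemma card_tr2_eq_0_le:
  assumes "1 \<le> n"
  shows "card {x::'a::field. tr2 n x = 0} \<le> 2 ^ (n - 1)"
proof -
  define P :: "'a poly" where "P = (\<Sum>i<n. monom 1 (2 ^ i))"
  have poly_P: "poly P x = tr2 n x" for x
    by (simp add: P_def tr2_def poly_sum poly_monom)
  have "degree P \<le> 2 ^ (n - 1)"
    unfolding P_def
  proof (rule degree_sum_le)
    fix i assume "i \<in> {..<n}"
    then show "degree (monom (1::'a) (2 ^ i)) \<le> 2 ^ (n - 1)"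
      by (simp add: degree_monom_eq power_increasing)
  qed simp
  moreover have "coeff P (2 ^ (n - 1)) = 1"
  proof -
    have "coeff P (2 ^ (n - 1)) = (\<Sum>i<n. if (2::nat) ^ i = 2 ^ (n - 1) then 1 else 0)"
      by (simp add: P_def coeff_sum coeff_monom)
    also have "\<dots> = (\<Sum>i<n. if i = n - 1 then 1 else 0)"
      by (intro sum.cong) auto
    finally show ?thesis
      using assms by simp
  qed
  then have "P \<noteq> 0"
    by auto
  ultimately show ?thesis
    using card_poly_roots_bound[of P] poly_P by simp
qed

lemma card_tr2_affine_eq_0_le:
  fixes \<mu> \<kappa> :: "'a::{field,finite}"
  assumes "1 \<le> n" and "\<mu> \<noteq> 0"
  shows "card {b. tr2 n (\<mu> * b + \<kappa>) = 0} \<le> 2 ^ (n - 1)"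
proof -
  have "inj (\<lambda>b. \<mu> * b + \<kappa>)"
    using assms(2) by (auto intro: injI)
  then have "card ((\<lambda>b. \<mu> * b + \<kappa>) -` {y. tr2 n y = 0} \<inter> UNIV) \<le> card {y::'a. tr2 n y = 0}"
    by (intro card_vimage_inj_on_le) auto
  then show ?thesis
    using card_tr2_eq_0_le[OF assms(1), where 'a='a] by (simp add: vimage_def)
qed

lemma tr2_eq_0_if_quadratic_root:
  fixes K d w x :: "'a::{field,finite}"
  assumes "card (UNIV :: 'a set) = 2 ^ n" and "d \<noteq> 0" and "K + d * x + w * x^2 = 0"
  shows "tr2 n (K * w / d^2) = 0"
proof -
  have char2: "(2::'a) = 0"
    by (rule char2_if_card_UNIV[OF assms(1)])
  define y where "y = w * x / d"
  have "y^2 + y = (w / d^2) * (d * x + w * x^2)"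
    unfolding y_def using assms(2) by (simp add: field_simps power2_eq_square)
  also have "d * x + w * x^2 = K"
    using assms(3) char2_add_eq_0_iff[OF char2] by (simp add: add.assoc)
  finally have "K * w / d^2 = y^2 + y"
    by simp
  then show ?thesis
    using tr2_artin_schreier[OF assms(1)] by simp
qed

lemma artin_schreier_surj:
  fixes a :: "'a::{field,finite}"
  assumes q: "card (UNIV :: 'a set) = 2 ^ n" and "tr2 n a = 0"
  shows "\<exists>g. a = g^2 + g"
proof -
  have char2: "(2::'a) = 0"
    by (rule char2_if_card_UNIV[OF q])
  have n: "1 \<le> n"
    using card_UNIV_ge_2[where 'a='a] q by (cases n) auto
  define I where "I = range (\<lambda>g::'a. g^2 + g)"
  have I_sub: "I \<subseteq> {y. tr2 n y = 0}"
    using tr2_artin_schreier[OF q] by (auto simp: I_def)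
  have "card (UNIV :: 'a set) \<le> (\<Sum>y\<in>I. card {g. g^2 + g = y})"
    by (rule order_trans[OF _ card_UN_le]) (auto simp: I_def intro!: card_mono)
  also have "\<dots> \<le> (\<Sum>y\<in>I. 2)"
  proof (rule sum_mono)
    fix y assume "y \<in> I"
    then obtain h where "y = h^2 + h"
      by (auto simp: I_def)
    then have "{g. g^2 + g = y} = {h, h + 1}"
      using artin_schreier_eq_iff[OF char2] by auto
    then show "card {g. g^2 + g = y} \<le> 2"
      by (simp add: card_insert_if)
  qed
  finally have "2 * 2 ^ (n - 1) \<le> 2 * card I"
    using q n by (simp flip: power_Suc)
  moreover have "card I \<le> card {y::'a. tr2 n y = 0}"
    using I_sub by (intro card_mono) auto
  moreover have "card {y::'a. tr2 n y = 0} \<le> 2 ^ (n - 1)"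
    by (rule card_tr2_eq_0_le[OF n])
  ultimately have "card I = card {y::'a. tr2 n y = 0}"
    by linarith
  then have "I = {y. tr2 n y = 0}"
    using I_sub by (intro card_subset_eq) auto
  then show ?thesis
    using assms(2) by (auto simp: I_def)
qed

section \<open>Intersecting families of quadratics\<close>

lemma intersectingD:
  assumes "intersecting U" and "g \<in> U" and "h \<in> U"
  shows "\<exists>x. poly g x = poly h x"
  using assms by (simp add: intersecting_def)

lemma fU_mem:
  assumes "intersecting U" and "(b, c) \<in> Dset U"
  shows "[:fU U b c, b, c:] \<in> U"
proof -
  obtain a where a: "[:a, b, c:] \<in> U"
    using assms(2) unfolding Dset_def by blast
  have unique: "a' = a" if "[:a', b, c:] \<in> U" for a'
    using intersectingD[OF assms(1) that a] by auto
  have "fU U b c = a"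
    unfolding fU_def using a unique by (rule the_equality)
  then show ?thesis
    using a by simp
qed

locale intersecting_quadratic_family =
  fixes U :: "'a::{field,finite} poly set" and n :: nat and A B :: "'a \<Rightarrow> 'a"
  assumes card_UNIV: "card (UNIV :: 'a set) = 2 ^ n"
    and card_UNIV_gt_2: "2 < card (UNIV :: 'a set)"
    and intersecting: "intersecting U"
    and fU_affine:
      "\<And>t b. t \<in> DomU U \<Longrightarrow> b \<in> Bset U t \<Longrightarrow> fU U b (b + t) = A t * b + B t"
    and tr2_A: "\<And>t. t \<in> DomU U \<Longrightarrow> tr2 n (A t) = 0"
begin

lemma char2: "(2::'a) = 0"
  by (rule char2_if_card_UNIV[OF card_UNIV])

lemma n_ge_2: "2 \<le> n"
proof (rule ccontr)
  assume "\<not> 2 \<le> n"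
  then have "n = 0 \<or> n = 1"
    by auto
  then show False
    using card_UNIV card_UNIV_gt_2 by auto
qed

lemma card_UNIV_eq_double: "card (UNIV :: 'a set) = 2 * 2 ^ (n - 1)"
  using card_UNIV n_ge_2 by (simp flip: power_Suc)

lemma card_Bset_ge:
  assumes "t \<in> DomU U"
  shows "real (card (UNIV :: 'a set)) - sqrt (card (UNIV :: 'a set)) / 2 \<le> card (Bset U t)"
  using assms by (simp add: DomU_def)

lemma poly_of_Bset_mem:
  assumes "t \<in> DomU U" and "b \<in> Bset U t"
  shows "[:A t * b + B t, b, b + t:] \<in> U"
  using fU_mem[OF intersecting, of b "b + t"] fU_affine[OF assms] assms(2)
  by (simp add: Bset_def)

lemma tr2_shifted_pair_eq_0:
  assumes "t \<in> DomU U" and "s \<in> DomU U" and "b \<in> Bset U t" and "b - d \<in> Bset U s"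
    and "d \<noteq> 0"
  shows "tr2 n (((A t - A s) * b + A s * d + (B t - B s)) * (d + (t - s)) / d^2) = 0"
proof -
  let ?P = "[:A t * b + B t, b, b + t:]" and ?Q = "[:A s * (b - d) + B s, b - d, b - d + s:]"
  obtain x where "poly ?P x = poly ?Q x"
    using intersectingD[OF intersecting poly_of_Bset_mem[OF assms(1,3)]
        poly_of_Bset_mem[OF assms(2,4)]]
    by blast
  moreover have "((A t - A s) * b + A s * d + (B t - B s)) + d * x + (d + (t - s)) * x^2
      = poly ?P x - poly ?Q x"
    by (simp add: algebra_simps power2_eq_square)
  ultimately show ?thesis
    using tr2_eq_0_if_quadratic_root[OF card_UNIV assms(5)] by simp
qed

lemma card_shifted_common_ge:
  assumes "t \<in> DomU U" and "s \<in> DomU U"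
  shows "real (card (UNIV :: 'a set)) - sqrt (card (UNIV :: 'a set))
    \<le> card {b \<in> Bset U t. b - d \<in> Bset U s}"
proof -
  let ?X = "Bset U t" and ?Y = "(\<lambda>b. b + d) ` Bset U s"
  have "card ?X + card ?Y \<le> card (UNIV :: 'a set) + card (?X \<inter> ?Y)"
    using card_Un_Int[of ?X ?Y] card_mono[of UNIV "?X \<union> ?Y"] by simp
  also have "?X \<inter> ?Y = {b \<in> Bset U t. b - d \<in> Bset U s}"
    by force
  also have "card ?Y = card (Bset U s)"
    by (rule card_image) (simp add: inj_on_def)
  finally have "card (Bset U t) + card (Bset U s)
      \<le> card (UNIV :: 'a set) + card {b \<in> Bset U t. b - d \<in> Bset U s}" .
  then show ?thesis
    using card_Bset_ge[OF assms(1)] card_Bset_ge[OF assms(2)] by linarith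
qed

lemma ex_shifted_common:
  assumes "t \<in> DomU U" and "s \<in> DomU U"
  shows "\<exists>b. b \<in> Bset U t \<and> b - d \<in> Bset U s"
proof -
  have "sqrt (card (UNIV :: 'a set)) < card (UNIV :: 'a set)"
    using card_UNIV_gt_2 by (intro real_less_lsqrt) (auto simp: power2_eq_square)
  then have "0 < card {b \<in> Bset U t. b - d \<in> Bset U s}"
    using card_shifted_common_ge[OF assms, of d] by linarith
  then show ?thesis
    by (auto simp: card_gt_0_iff)
qed

lemma A_eq_if_n_ge_3:
  assumes "3 \<le> n" and t: "t \<in> DomU U" and s: "s \<in> DomU U"
  shows "A t = A s"
proof (rule ccontr)
  assume "A t \<noteq> A s"
  have "(2::nat) ^ 3 \<le> card (UNIV :: 'a set)"
    unfolding card_UNIV using assms(1) by (intro power_increasing) auto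
  then have sqrt_lt: "sqrt (card (UNIV :: 'a set)) < card (UNIV :: 'a set) / 2"
    by (intro sqrt_lt_half) simp
  obtain d where d: "d \<noteq> 0" "d \<noteq> t - s"
    using ex_avoiding_two[OF card_UNIV_gt_2] by blast
  define \<mu> where "\<mu> = (A t - A s) * (d + (t - s)) / d^2"
  define \<kappa> where "\<kappa> = (A s * d + (B t - B s)) * (d + (t - s)) / d^2"
  have "\<mu> \<noteq> 0"
    using \<open>A t \<noteq> A s\<close> d char2_add_eq_0_iff[OF char2, of d] by (simp add: \<mu>_def)
  have sub: "{b \<in> Bset U t. b - d \<in> Bset U s} \<subseteq> {b. tr2 n (\<mu> * b + \<kappa>) = 0}"
  proof safe
    fix b assume "b \<in> Bset U t" "b - d \<in> Bset U s"
    moreover have "((A t - A s) * b + A s * d + (B t - B s)) * (d + (t - s)) / d^2 = \<mu> * b + \<kappa>"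
      using d(1) by (simp add: \<mu>_def \<kappa>_def field_simps)
    ultimately show "tr2 n (\<mu> * b + \<kappa>) = 0"
      using tr2_shifted_pair_eq_0[OF t s _ _ d(1)] by metis
  qed
  have "card {b \<in> Bset U t. b - d \<in> Bset U s} \<le> card {b. tr2 n (\<mu> * b + \<kappa>) = 0}"
    by (rule card_mono[OF _ sub]) simp
  also have "\<dots> \<le> 2 ^ (n - 1)"
    using n_ge_2 \<open>\<mu> \<noteq> 0\<close> by (intro card_tr2_affine_eq_0_le) auto
  finally have "real (card {b \<in> Bset U t. b - d \<in> Bset U s}) \<le> 2 ^ (n - 1)"
    by (metis of_nat_le_iff of_nat_numeral of_nat_power)
  moreover have "real (card (UNIV :: 'a set)) = 2 * 2 ^ (n - 1)"
    using card_UNIV_eq_double by simp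
  ultimately show False
    using sqrt_lt card_shifted_common_ge[OF t s, of d] by linarith
qed

(*
  For q = 4 the bound q - sqrt q = q/2 gives no contradiction. Instead, B_t and B_s miss at most
  one point each, and the trace condition confines the other elements of B_t \<inter> (B_s + d) to a
  pair {x, x + 1/\<mu>}; as the four field elements sum to 0, this determines p + r.
*)
lemma sum_missing_points_if_n_eq_2:
  assumes "n = 2" and t: "t \<in> DomU U" and s: "s \<in> DomU U"
    and "A t - A s = 1" and p: "- {p} \<subseteq> Bset U t" and r: "- {r} \<subseteq> Bset U s"
    and d: "d \<noteq> 0" "d \<noteq> t - s"
  shows "p + r = d + d^2 / (d + (t - s))"
proof -
  define \<mu> where "\<mu> = (d + (t - s)) / d^2"
  define \<kappa> where "\<kappa> = (A s * d + (B t - B s)) * (d + (t - s)) / d^2"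
  have "\<mu> \<noteq> 0"
    using d char2_add_eq_0_iff[OF char2, of d] by (simp add: \<mu>_def)
  have "b \<in> {\<kappa> / \<mu>, (1 + \<kappa>) / \<mu>}" if "b \<noteq> p" "b \<noteq> r + d" for b
  proof -
    have "b \<in> Bset U t" "b - d \<in> Bset U s"
      using that p r by (auto simp: diff_eq_eq)
    moreover have "((A t - A s) * b + A s * d + (B t - B s)) * (d + (t - s)) / d^2 = \<mu> * b + \<kappa>"
      unfolding assms(4) using d(1) by (simp add: \<mu>_def \<kappa>_def field_simps)
    ultimately have "tr2 2 (\<mu> * b + \<kappa>) = 0"
      using tr2_shifted_pair_eq_0[OF t s _ _ d(1)] \<open>n = 2\<close> by metis
    then have "\<mu> * b + \<kappa> = 0 \<or> \<mu> * b + \<kappa> = 1"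
      by (simp add: tr2_2_eq_0_iff[OF char2])
    moreover have "b = (\<mu> * b + \<kappa> + \<kappa>) / \<mu>"
      using \<open>\<mu> \<noteq> 0\<close> by (simp add: add.assoc char2_add_self[OF char2])
    ultimately have "b = (0 + \<kappa>) / \<mu> \<or> b = (1 + \<kappa>) / \<mu>"
      by metis
    then show ?thesis
      by simp
  qed
  then have "UNIV = {\<kappa> / \<mu>, (1 + \<kappa>) / \<mu>, p, r + d}"
    by blast
  then have "\<kappa> / \<mu> + (1 + \<kappa>) / \<mu> + p + (r + d) = 0"
    by (rule sum_eq_0_if_UNIV_card_4[rotated]) (simp add: card_UNIV \<open>n = 2\<close>)
  moreover have "\<kappa> / \<mu> + (1 + \<kappa>) / \<mu> = (1 + (\<kappa> + \<kappa>)) / \<mu>"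
    by (simp add: add_divide_distrib ac_simps)
  moreover have "\<dots> = d^2 / (d + (t - s))"
    by (simp add: char2_add_self[OF char2] \<mu>_def)
  ultimately have "(p + r) + (d + d^2 / (d + (t - s))) = 0"
    by (simp add: ac_simps)
  then show ?thesis
    by (simp add: char2_add_eq_0_iff[OF char2])
qed

lemma A_eq_if_n_eq_2:
  assumes "n = 2" and t: "t \<in> DomU U" and s: "s \<in> DomU U"
  shows "A t = A s"
proof (rule ccontr)
  assume "A t \<noteq> A s"
  have "A x = 0 \<or> A x = 1" if "x \<in> DomU U" for x
    using tr2_A[OF that] tr2_2_eq_0_iff[OF char2] \<open>n = 2\<close> by simp
  then have "A t = 1 \<and> A s = 0 \<or> A t = 0 \<and> A s = 1"
    using \<open>A t \<noteq> A s\<close> t s by metis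
  then have "A t - A s = 1"
    using char2_minus_eq[OF char2, of 1] by auto
  have "\<exists>p. - {p} \<subseteq> Bset U x" if "x \<in> DomU U" for x
    using card_Bset_ge[OF that] card_UNIV \<open>n = 2\<close> by (intro ex_cosingleton_subset) simp
  then obtain p r where p: "- {p} \<subseteq> Bset U t" and r: "- {r} \<subseteq> Bset U s"
    using t s by blast
  define e where "e = t - s"
  have "e \<noteq> 0"
    using \<open>A t \<noteq> A s\<close> by (auto simp: e_def)
  obtain d1 where d1: "d1 \<noteq> 0" "d1 \<noteq> e"
    using ex_avoiding_two[OF card_UNIV_gt_2] by blast
  define d2 where "d2 = d1 + e"
  have d2: "d2 \<noteq> 0" "d2 \<noteq> e" and "d2 + e = d1"
    using d1 char2_add_eq_0_iff[OF char2] char2_add_self[OF char2, of e]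
    by (auto simp: d2_def add.assoc)
  note missing = sum_missing_points_if_n_eq_2[OF \<open>n = 2\<close> t s \<open>A t - A s = 1\<close> p r]
  have "p + r = d1 + d1^2 / d2"
    using missing[OF d1[unfolded e_def]] by (simp add: d2_def e_def)
  moreover have "p + r = d2 + d2^2 / d1"
    using missing[OF d2[unfolded e_def]] \<open>d2 + e = d1\<close> by (simp add: e_def)
  ultimately have "(d1 + d2)^3 = 0"
    using char2_cube_of_sum[OF char2 d1(1) d2(1)] by simp
  moreover have "d1 + d2 = e"
    using char2_add_self[OF char2, of d1] by (simp add: d2_def add.assoc[symmetric])
  ultimately show False
    using \<open>e \<noteq> 0\<close> by simp
qed

lemma A_eq:
  assumes "t \<in> DomU U" and "s \<in> DomU U"
  shows "A t = A s"
proof (cases "n = 2")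
  case True
  then show ?thesis
    using A_eq_if_n_eq_2[OF _ assms] by simp
next
  case False
  then show ?thesis
    using A_eq_if_n_ge_3[OF _ assms] n_ge_2 by simp
qed

(*
  With u = 1/d the trace condition splits as Tr A + Tr(\<Lambda> u), because (B t - B s) (t - s) u^2
  is a square.
*)
lemma tr2_Lambda_mult_eq_0:
  assumes t: "t \<in> DomU U" and s: "s \<in> DomU U" and "u \<noteq> 0" and "u * (t - s) \<noteq> 1"
  shows "tr2 n ((A s * (t - s) + (B t - B s) + frob_inv ((B t - B s) * (t - s))) * u) = 0"
proof -
  define e c d where "e = t - s" and "c = B t - B s" and "d = 1 / u"
  have "d \<noteq> 0" and "d \<noteq> t - s"
    using assms(3,4) by (auto simp: d_def e_def field_simps)
  obtain b where "b \<in> Bset U t" "b - d \<in> Bset U s"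
    using ex_shifted_common[OF t s] by blast
  then have "tr2 n ((A s * d + c) * (d + e) / d^2) = 0"
    using tr2_shifted_pair_eq_0[OF t s _ _ \<open>d \<noteq> 0\<close>] A_eq[OF t s] by (simp add: c_def e_def)
  moreover have
    "(A s * d + c) * (d + e) / d^2 = A s + ((A s * e + c) * u + (frob_inv (c * e) * u)^2)"
    using assms(3) power2_frob_inv[OF card_UNIV, of "c * e"]
    by (simp add: d_def field_simps power2_eq_square)
  ultimately have "tr2 n (A s) + (tr2 n ((A s * e + c) * u) + tr2 n (frob_inv (c * e) * u)) = 0"
    using tr2_add[OF char2] tr2_power2[OF power_2_power_eq[OF card_UNIV]] by simp
  then show ?thesis
    using tr2_A[OF s] tr2_add[OF char2] by (simp add: c_def e_def distrib_right)
qed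

lemma Lambda_eq_0:
  assumes t: "t \<in> DomU U" and s: "s \<in> DomU U" and "t \<noteq> s"
  shows "A s * (t - s) + (B t - B s) + frob_inv ((B t - B s) * (t - s)) = 0"
proof (rule ccontr)
  define \<Lambda> where "\<Lambda> = A s * (t - s) + (B t - B s) + frob_inv ((B t - B s) * (t - s))"
  assume "\<Lambda> \<noteq> 0"
  have "tr2 n (\<Lambda> * u + 0) = 0" if "u \<noteq> 1 / (t - s)" for u
  proof (cases "u = 0")
    case False
    moreover have "u * (t - s) \<noteq> 1"
      using that \<open>t \<noteq> s\<close> by (simp add: eq_divide_eq)
    ultimately show ?thesis
      using tr2_Lambda_mult_eq_0[OF t s] by (simp add: \<Lambda>_def)
  qed simp
  then have "card (- {1 / (t - s)}) \<le> card {u. tr2 n (\<Lambda> * u + 0) = 0}"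
    by (intro card_mono) auto
  also have "\<dots> \<le> 2 ^ (n - 1)"
    using n_ge_2 \<open>\<Lambda> \<noteq> 0\<close> by (intro card_tr2_affine_eq_0_le) auto
  finally have "2 * 2 ^ (n - 1) - 1 \<le> (2::nat) ^ (n - 1)"
    by (simp add: Compl_eq_Diff_UNIV card_Diff_singleton card_UNIV_eq_double)
  moreover have "(2::nat) \<le> 2 ^ (n - 1)"
    using n_ge_2 power_increasing[of 1 "n - 1" "2::nat"] by simp
  ultimately show False
    by linarith
qed

lemma B_slopes:
  assumes A_g: "\<And>t. t \<in> DomU U \<Longrightarrow> A t = g^2 + g"
    and t: "t \<in> DomU U" and s: "s \<in> DomU U"
  shows "B t - B s = g^2 * (t - s) \<or> B t - B s = (g + 1)^2 * (t - s)"
proof (cases "t = s")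
  case False
  define e \<gamma> where "e = t - s" and "\<gamma> = (B t - B s) / e"
  have "e \<noteq> 0"
    using False by (simp add: e_def)
  then have slope: "B t - B s = \<gamma> * e"
    by (simp add: \<gamma>_def)
  have "frob_inv (\<gamma> * e * e) = frob_inv \<gamma> * frob_inv (e^2)"
    by (simp add: frob_inv_def power2_eq_square power_mult_distrib mult.assoc)
  then have root: "frob_inv ((B t - B s) * e) = frob_inv \<gamma> * e"
    by (simp add: slope frob_inv_power2[OF card_UNIV])
  have "A s * e + (B t - B s) + frob_inv ((B t - B s) * e) = 0"
    using Lambda_eq_0[OF t s False] by (simp add: e_def)
  then have "A s * e + \<gamma> * e + frob_inv \<gamma> * e = 0"
    unfolding root by (simp add: slope)
  then have "e * (A s + (\<gamma> + frob_inv \<gamma>)) = 0"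
    by (simp add: algebra_simps)
  then have "A s + (\<gamma> + frob_inv \<gamma>) = 0"
    using \<open>e \<noteq> 0\<close> by simp
  then have "(frob_inv \<gamma>)^2 + frob_inv \<gamma> = g^2 + g"
    using A_g[OF s] char2_add_eq_0_iff[OF char2] by (simp add: power2_frob_inv[OF card_UNIV])
  then have "frob_inv \<gamma> = g \<or> frob_inv \<gamma> = g + 1"
    by (simp add: artin_schreier_eq_iff[OF char2])
  then have "\<gamma> = g^2 \<or> \<gamma> = (g + 1)^2"
    using power2_frob_inv[OF card_UNIV, of \<gamma>] by auto
  then show ?thesis
    using slope by (auto simp: e_def)
qed simp

end

theorem lemma13:
  fixes U :: "'a::{field,finite} poly set"
    and n :: nat
    and A B :: "'a \<Rightarrow> 'a"
  assumes q: "card (UNIV :: 'a set) = 2 ^ n"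
    and q2: "card (UNIV :: 'a set) > 2"
    and deg: "\<forall>g\<in>U. degree g \<le> 2"
    and inter: "intersecting U"
    and lin: "\<forall>t\<in>DomU U. \<forall>b\<in>Bset U t. fU U b (b + t) = A t * b + B t"
    and trA: "\<forall>t\<in>DomU U. tr2 n (A t) = 0"
  shows "\<exists>\<alpha> \<beta>. \<forall>t\<in>DomU U. A t = \<alpha> ^ (card (UNIV :: 'a set) div 2) + \<alpha> \<and> B t = \<alpha> * t + \<beta>"
proof -
  interpret intersecting_quadratic_family U n A B
    using q q2 inter lin trA by unfold_locales auto
  show ?thesis
  proof (cases "DomU U = {}")
    case False
    then obtain t0 where t0: "t0 \<in> DomU U"
      by blast
    obtain g where "A t0 = g^2 + g"
      using artin_schreier_surj[OF q tr2_A[OF t0]] by blast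
    then have A_g: "A t = g^2 + g" if "t \<in> DomU U" for t
      using A_eq[OF that t0] by simp
    obtain m \<beta> where m: "m \<in> {g^2, (g + 1)^2}" and B_m: "\<forall>t\<in>DomU U. B t = m * t + \<beta>"
      using affine_on_if_two_slopes[OF B_slopes[OF A_g]] by blast
    have "frob_inv m + m = g^2 + g"
      using m frob_inv_power2[OF q] artin_schreier_eq_iff[OF char2, of "g + 1" g]
      by (auto simp: ac_simps)
    then show ?thesis
      using A_g B_m unfolding frob_inv_def by metis
  qed simp
qed

end
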